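(* Let $J_1>J_2>0$ and $\delta>0$. There exists $\beta_0=\beta_0(\delta)<\infty$ (possibly depending on the couplings) such that for all $\beta\ge\beta_0$, every translation-invariant, ergodic infinite-volume Gibbs measure $\mu$ at inverse temperature $\beta$ satisfies $\mathbb E_\mu([S^x_{\boldsymbol r}]^2)\ge1-\delta$ for all $\boldsymbol r\in\mathbb Z^2$. Similarly, if $J_2>J_1>0$, then for $\beta\ge\beta_0(\delta)$, $\mathbb E_\mu([S^z_{\boldsymbol r}]^2)\ge1-\delta$ for all such $\mu$ and all $\boldsymbol r$.
   Context: On $\mathbb Z^2$ the horizontal edge $\langle \boldsymbol r,\boldsymbol r+\boldsymbol e_1\rangle$ is an $x$-edge if $r_1$ is even and a $z$-edge if $r_1$ is odd; the vertical edge $\langle\boldsymbol r,\boldsymbol r+\boldsymbol e_2\rangle$ is an $x$-edge if $r_2$ is even and a $z$-edge otherwise. Spins $\mathbf S_{\boldsymbol r}=(S^x_{\boldsymbol r},S^z_{\boldsymbol r})$ are unit vectors in $\mathbb R^2$ with a priori uniform measure $\nu$ on the unit circle. The formal Hamiltonian is $-J_1\sum_{x\text{-edges}}S^x_{\boldsymbol r}S^x_{\boldsymbol r'}-J_2\sum_{z\text{-edges}}S^z_{\boldsymbol r}S^z_{\boldsymbol r'}$. Infinite-volume Gibbs measures at inverse temperature $\beta$ are defined by the DLR condition: for each finite $\Lambda$, the conditional law of the spins in $\Lambda$ given those outside has density proportional to $e^{-\beta\mathcal H_\Lambda}$ w.r.t. $\prod_{\boldsymbol r\in\Lambda}\nu$,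 $\mathcal H_\Lambda$ being the sum of the interaction terms over edges with at least one endpoint in $\Lambda$. Translation invariance means invariance under shifts by $2\boldsymbol e_1$ and $2\boldsymbol e_2$; ergodicity means triviality ($\mu$-probability 0 or 1) of events invariant under these shifts. *)

theory Defs
  imports "HOL-Probability.Probability"
begin

type_synonym site = "int \<times> int"
type_synonym spin = "real \<times> real"   (* (S^x, S^z) *)
type_synonym config = "site \<Rightarrow> spin"

definition nu :: "spin measure" where
  "nu = distr (uniform_measure lborel {0..2*pi}) borel (\<lambda>t. (cos t, sin t))"

definition Omega :: "config measure" where
  "Omega = PiM UNIV (\<lambda>_. nu)"

definition hbond :: "real \<Rightarrow> real \<Rightarrow> config \<Rightarrow> site \<Rightarrow> real" where
  "hbond J1 J2 w r = (let r' = (fst r + 1, snd r) in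
     if even (fst r) then - J1 * fst (w r) * fst (w r') else - J2 * snd (w r) * snd (w r'))"

definition vbond :: "real \<Rightarrow> real \<Rightarrow> config \<Rightarrow> site \<Rightarrow> real" where
  "vbond J1 J2 w r = (let r' = (fst r, snd r + 1) in
     if even (snd r) then - J1 * fst (w r) * fst (w r') else - J2 * snd (w r) * snd (w r'))"

text \<open>H_Lambda: sum over all edges with at least one endpoint in Lambda (edges indexed by lower endpoint).\<close>
definition H_Lam :: "real \<Rightarrow> real \<Rightarrow> site set \<Rightarrow> config \<Rightarrow> real" where
  "H_Lam J1 J2 L w =
     (\<Sum>r\<in>{r. r \<in> L \<or> (fst r + 1, snd r) \<in> L}. hbond J1 J2 w r)
   + (\<Sum>r\<in>{r. r \<in> L \<or> (fst r, snd r + 1) \<in> L}. vbond J1 J2 w r)"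

definition glue :: "site set \<Rightarrow> config \<Rightarrow> config \<Rightarrow> config" where
  "glue L s w = (\<lambda>r. if r \<in> L then s r else w r)"

definition spec :: "real \<Rightarrow> real \<Rightarrow> real \<Rightarrow> site set \<Rightarrow> config set \<Rightarrow> config \<Rightarrow> real" where
  "spec J1 J2 beta L A w =
     (\<integral>s. indicator A (glue L s w) * exp (- beta * H_Lam J1 J2 L (glue L s w)) \<partial>PiM L (\<lambda>_. nu))
     / (\<integral>s. exp (- beta * H_Lam J1 J2 L (glue L s w)) \<partial>PiM L (\<lambda>_. nu))"

definition gibbs :: "real \<Rightarrow> real \<Rightarrow> real \<Rightarrow> config measure \<Rightarrow> bool" where
  "gibbs J1 J2 beta mu \<longleftrightarrow> prob_space mu \<and> sets mu = sets Omega \<and>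
     (\<forall>L. finite L \<longrightarrow> (\<forall>A\<in>sets Omega.
        emeasure mu A = (\<integral>\<^sup>+ w. ennreal (spec J1 J2 beta L A w) \<partial>mu)))"

definition shift1 :: "config \<Rightarrow> config" where
  "shift1 w = (\<lambda>r. w (fst r + 2, snd r))"

definition shift2 :: "config \<Rightarrow> config" where
  "shift2 w = (\<lambda>r. w (fst r, snd r + 2))"

definition transl_inv :: "config measure \<Rightarrow> bool" where
  "transl_inv mu \<longleftrightarrow> distr mu Omega shift1 = mu \<and> distr mu Omega shift2 = mu"

definition ergodic :: "config measure \<Rightarrow> bool" where
  "ergodic mu \<longleftrightarrow> (\<forall>A\<in>sets Omega.
      (shift1 -` A \<inter> space Omega = A \<and> shift2 -` A \<inter> space Omega = A)
      \<longrightarrow> (emeasure mu A = 0 \<or> emeasure mu A = 1))"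

end

theory Submission
  imports Defs
begin

text \<open>
  Splitting every bond energy as \<open>- J a b = J (a - b)\<^sup>2 / 2 - J a\<^sup>2 / 2 - J b\<^sup>2 / 2\<close> writes the
  Hamiltonian of a \<open>2n \<times> 2n\<close> box as minus the sum of the site energies \<open>J1 x\<^sup>2 + J2 z\<^sup>2\<close>, plus
  nonnegative bond defects, plus a boundary term of order \<open>n\<close>. The site energy on the unit circle is
  maximal at \<open>(1, 0)\<close> if \<open>J1 > J2\<close> and at \<open>(0, 1)\<close> if \<open>J2 > J1\<close>, and its deficit from the maximum
  is \<open>|J1 - J2|\<close> times the square of the other component. Whatever the boundary condition,
  configurations whose total deficit in the box exceeds \<open>c (2n)\<^sup>2\<close> have energy larger by about
  \<open>c (2n)\<^sup>2\<close> than those with every spin within \<open>\<eta>\<close> of the maximiser, which have a priori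
  probability at least \<open>(\<eta> / 2\<pi>)\<^bsup>(2n)\<^sup>2\<^esup>\<close>. For large \<open>\<beta>\<close> the DLR equations make the
  former improbable, and translation invariance turns the resulting bound on the box average of
  the deficit into a bound at every single site.
\<close>

section \<open>The single-site measure\<close>

abbreviation unit_spin :: "spin \<Rightarrow> bool" where
  "unit_spin p \<equiv> (fst p)\<^sup>2 + (snd p)\<^sup>2 = 1"

lemma unit_spin_bounds:
  assumes "unit_spin p"
  shows "\<bar>fst p\<bar> \<le> 1" "\<bar>snd p\<bar> \<le> 1" "(fst p)\<^sup>2 \<le> 1" "(snd p)\<^sup>2 \<le> 1"
proof -
  show "(fst p)\<^sup>2 \<le> 1" "(snd p)\<^sup>2 \<le> 1"
    using assms zero_le_power2[of "fst p"] zero_le_power2[of "snd p"] by linarith+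
  then show "\<bar>fst p\<bar> \<le> 1" "\<bar>snd p\<bar> \<le> 1"
    by (simp_all add: abs_square_le_1)
qed

lemma abs_cos_diff_le: "\<bar>cos x - cos y\<bar> \<le> \<bar>x - y\<bar>" for x y :: real
proof -
  have "\<bar>cos x - cos y\<bar> = 2 * \<bar>sin ((x + y) / 2)\<bar> * \<bar>sin ((y - x) / 2)\<bar>"
    by (simp add: cos_diff_cos abs_mult)
  also have "\<dots> \<le> 2 * 1 * \<bar>(y - x) / 2\<bar>"
    by (intro mult_mono abs_sin_x_le_abs_x) auto
  finally show ?thesis by simp
qed

lemma abs_sin_diff_le: "\<bar>sin x - sin y\<bar> \<le> \<bar>x - y\<bar>" for x y :: real
proof -
  have "\<bar>sin x - sin y\<bar> = 2 * \<bar>sin ((x - y) / 2)\<bar> * \<bar>cos ((x + y) / 2)\<bar>"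
    by (simp add: sin_diff_sin abs_mult)
  also have "\<dots> \<le> 2 * \<bar>(x - y) / 2\<bar> * 1"
    by (intro mult_mono abs_sin_x_le_abs_x) auto
  finally show ?thesis by simp
qed

lemma space_nu [simp]: "space nu = UNIV"
  by (simp add: nu_def)

lemma sets_nu [simp]: "sets nu = sets borel"
  by (simp add: nu_def)

lemma prob_space_nu: "prob_space nu"
  unfolding nu_def by (intro prob_space.prob_space_distr prob_space_uniform_measure) auto

interpretation nu: prob_space nu
  by (rule prob_space_nu)

lemma measurable_cos_sin: "(\<lambda>t. (cos t, sin t)) \<in> measurable (uniform_measure lborel {0..2*pi}) borel"
  by (simp add: borel_measurable_continuous_onI continuous_intros cong: measurable_cong_sets)

lemma closed_unit_spin: "closed {p :: spin. unit_spin p}"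
  by (intro closed_Collect_eq) (auto intro!: continuous_intros)

lemma AE_nu_unit_spin: "AE p in nu. unit_spin p"
  unfolding nu_def using closed_unit_spin
  by (subst AE_distr_iff[OF measurable_cos_sin]) auto

definition spin_nbhd :: "real \<Rightarrow> spin \<Rightarrow> spin set" where
  "spin_nbhd \<eta> p0 = {p. unit_spin p \<and> \<bar>fst p - fst p0\<bar> \<le> \<eta> \<and> \<bar>snd p - snd p0\<bar> \<le> \<eta>}"

lemma spin_nbhd_borel: "spin_nbhd \<eta> p0 \<in> sets borel"
  unfolding spin_nbhd_def
  by (intro borel_closed closed_Collect_conj closed_unit_spin[unfolded mem_Collect_eq]
        closed_Collect_le) (auto intro!: continuous_intros)

lemma measure_nu_spin_nbhd:
  assumes "0 \<le> \<theta>" "0 \<le> \<eta>" "\<theta> + \<eta> \<le> 2 * pi"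
  shows "\<eta> / (2 * pi) \<le> measure nu (spin_nbhd \<eta> (cos \<theta>, sin \<theta>))"
proof -
  let ?G = "spin_nbhd \<eta> (cos \<theta>, sin \<theta>)"
  let ?U = "uniform_measure lborel {0..2*pi}"
  let ?P = "(\<lambda>t. (cos t, sin t)) -` ?G"
  have P: "?P \<in> sets borel"
    using measurable_sets[OF measurable_cos_sin spin_nbhd_borel] by simp
  have arc: "{\<theta>..\<theta> + \<eta>} \<subseteq> {0..2*pi} \<inter> ?P"
  proof
    fix t assume t: "t \<in> {\<theta>..\<theta> + \<eta>}"
    have "\<bar>cos t - cos \<theta>\<bar> \<le> \<eta>" "\<bar>sin t - sin \<theta>\<bar> \<le> \<eta>"
      using t abs_cos_diff_le[of t \<theta>] abs_sin_diff_le[of t \<theta>] by auto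
    then show "t \<in> {0..2*pi} \<inter> ?P"
      using t assms by (simp add: spin_nbhd_def)
  qed
  have "emeasure nu ?G = emeasure ?U ?P"
    unfolding nu_def using spin_nbhd_borel by (subst emeasure_distr[OF measurable_cos_sin]) auto
  also have "\<dots> = emeasure lborel ({0..2*pi} \<inter> ?P) / emeasure lborel {0..2*pi}"
    using P by (subst emeasure_uniform_measure) auto
  also have "\<dots> \<ge> emeasure lborel {\<theta>..\<theta> + \<eta>} / emeasure lborel {0..2*pi}"
    using arc P by (intro divide_right_mono_ennreal emeasure_mono) auto
  finally have "ennreal (\<eta> / (2 * pi)) \<le> emeasure nu ?G"
    using assms by (simp add: divide_ennreal)
  then show ?thesis
    by (simp add: nu.emeasure_eq_measure)
qed

section \<open>Measurability and the partition function\<close>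

lemma borel_measurable_fst_spin [measurable]: "(fst :: spin \<Rightarrow> real) \<in> borel_measurable borel"
  and borel_measurable_snd_spin [measurable]: "(snd :: spin \<Rightarrow> real) \<in> borel_measurable borel"
  by (intro borel_measurable_continuous_onI continuous_intros)+

lemma space_Omega [simp]: "space Omega = UNIV"
  by (simp add: Omega_def space_PiM)

lemma measurable_glue_component:
  "(\<lambda>s. glue L s w r) \<in> measurable (PiM L (\<lambda>_. nu)) borel"
proof (cases "r \<in> L")
  case True
  then have "(\<lambda>s. s r) \<in> measurable (PiM L (\<lambda>_. nu)) nu"
    by (rule measurable_component_singleton)
  then show ?thesis
    using True by (simp add: glue_def cong: measurable_cong_sets)
qed (simp add: glue_def)

lemma borel_measurable_glue_fst [measurable]:
  "(\<lambda>s. fst (glue L s w r)) \<in> borel_measurable (PiM L (\<lambda>_. nu))"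
  using measurable_compose[OF measurable_glue_component borel_measurable_fst_spin] by simp

lemma borel_measurable_glue_snd [measurable]:
  "(\<lambda>s. snd (glue L s w r)) \<in> borel_measurable (PiM L (\<lambda>_. nu))"
  using measurable_compose[OF measurable_glue_component borel_measurable_snd_spin] by simp

lemma borel_measurable_H_Lam_glue [measurable]:
  "(\<lambda>s. H_Lam J1 J2 L (glue L s w)) \<in> borel_measurable (PiM L (\<lambda>_. nu))"
  unfolding H_Lam_def hbond_def vbond_def Let_def by measurable

lemma measurable_glue: "(\<lambda>s. glue L s w) \<in> measurable (PiM L (\<lambda>_. nu)) Omega"
  unfolding Omega_def
  by (rule measurable_PiM_single') (auto simp: measurable_glue_component cong: measurable_cong_sets)

lemma measurable_Omega_component: "(\<lambda>w. w r) \<in> measurable Omega borel"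
  unfolding Omega_def using measurable_component_singleton[of r UNIV "\<lambda>_. nu"]
  by (simp cong: measurable_cong_sets)

lemma borel_measurable_Omega_spin:
  "f \<in> borel_measurable borel \<Longrightarrow> (\<lambda>w. f (w r)) \<in> borel_measurable Omega"
  using measurable_compose[OF measurable_Omega_component] by blast

lemma borel_measurable_Omega_fst [measurable]: "(\<lambda>w. fst (w r)) \<in> borel_measurable Omega"
  and borel_measurable_Omega_snd [measurable]: "(\<lambda>w. snd (w r)) \<in> borel_measurable Omega"
  by (intro borel_measurable_Omega_spin borel_measurable_fst_spin borel_measurable_snd_spin)+

lemma prob_space_PiM_nu: "prob_space (PiM L (\<lambda>_. nu))"
  by (intro prob_space_PiM prob_space_nu)

lemma AE_PiM_nu_unit_spin:
  assumes "finite L"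
  shows "AE s in PiM L (\<lambda>_. nu). \<forall>t\<in>L. unit_spin (s t)"
proof -
  have "\<forall>t\<in>L. AE s in PiM L (\<lambda>_. nu). unit_spin (s t)"
    using AE_PiM_component[where M="\<lambda>_. nu" and I=L and P=unit_spin] prob_space_nu AE_nu_unit_spin
    by blast
  then show ?thesis
    using assms by (subst AE_ball_countable) (auto intro: countable_finite)
qed

text \<open>The partition function must be positive for every boundary condition \<open>w\<close>, since
  \<open>spec\<close> divides by it; hence a bound on \<open>H_Lam\<close> that allows spins of any length outside \<open>L\<close>.\<close>

definition spin_size :: "config \<Rightarrow> site \<Rightarrow> real" where
  "spin_size w r = 1 + \<bar>fst (w r)\<bar> + \<bar>snd (w r)\<bar>"

definition energy_bound :: "real \<Rightarrow> real \<Rightarrow> site set \<Rightarrow> config \<Rightarrow> real" where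
  "energy_bound J1 J2 L w =
     (\<Sum>r\<in>{r. r \<in> L \<or> (fst r + 1, snd r) \<in> L}. (\<bar>J1\<bar> + \<bar>J2\<bar>) * spin_size w r * spin_size w (fst r + 1, snd r))
   + (\<Sum>r\<in>{r. r \<in> L \<or> (fst r, snd r + 1) \<in> L}. (\<bar>J1\<bar> + \<bar>J2\<bar>) * spin_size w r * spin_size w (fst r, snd r + 1))"

lemma abs_mult3_le:
  fixes J x y :: real
  assumes "\<bar>J\<bar> \<le> C" "\<bar>x\<bar> \<le> a" "\<bar>y\<bar> \<le> b"
  shows "\<bar>J * x * y\<bar> \<le> C * a * b"
proof -
  have "\<bar>J * x * y\<bar> = \<bar>J\<bar> * (\<bar>x\<bar> * \<bar>y\<bar>)"
    by (simp add: abs_mult)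
  also have "\<dots> \<le> C * (a * b)"
    using assms by (intro mult_mono) (auto intro: mult_mono order.trans[OF abs_ge_zero])
  finally show ?thesis
    by simp
qed

lemma abs_H_Lam_glue_le:
  assumes "\<forall>t\<in>L. unit_spin (s t)"
  shows "\<bar>H_Lam J1 J2 L (glue L s w)\<bar> \<le> energy_bound J1 J2 L w"
proof -
  let ?v = "glue L s w"
  have size: "\<bar>fst (?v r)\<bar> \<le> spin_size w r" "\<bar>snd (?v r)\<bar> \<le> spin_size w r" for r
    using assms unit_spin_bounds[of "s r"] by (auto simp: glue_def spin_size_def)
  have J: "\<bar>J1\<bar> \<le> \<bar>J1\<bar> + \<bar>J2\<bar>" "\<bar>J2\<bar> \<le> \<bar>J1\<bar> + \<bar>J2\<bar>"
    by simp_all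
  have "\<bar>hbond J1 J2 ?v r\<bar> \<le> (\<bar>J1\<bar> + \<bar>J2\<bar>) * spin_size w r * spin_size w (fst r + 1, snd r)" for r
    unfolding hbond_def Let_def
    using J size[of r] size[of "(fst r + 1, snd r)"] by (auto intro!: abs_mult3_le)
  moreover have "\<bar>vbond J1 J2 ?v r\<bar> \<le> (\<bar>J1\<bar> + \<bar>J2\<bar>) * spin_size w r * spin_size w (fst r, snd r + 1)" for r
    unfolding vbond_def Let_def
    using J size[of r] size[of "(fst r, snd r + 1)"] by (auto intro!: abs_mult3_le)
  ultimately show ?thesis
    unfolding H_Lam_def energy_bound_def
    by (intro order.trans[OF abs_triangle_ineq] add_mono order.trans[OF sum_abs] sum_mono)
qed

lemma integrable_boltzmann:
  assumes "finite L"
  shows "integrable (PiM L (\<lambda>_. nu)) (\<lambda>s. exp (- beta * H_Lam J1 J2 L (glue L s w)))"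
proof -
  interpret P: prob_space "PiM L (\<lambda>_. nu)"
    by (rule prob_space_PiM_nu)
  show ?thesis
  proof (rule P.integrable_const_bound[where B="exp (\<bar>beta\<bar> * energy_bound J1 J2 L w)"])
    show "AE s in PiM L (\<lambda>_. nu). norm (exp (- beta * H_Lam J1 J2 L (glue L s w)))
                                   \<le> exp (\<bar>beta\<bar> * energy_bound J1 J2 L w)"
      using AE_PiM_nu_unit_spin[OF assms]
    proof eventually_elim
      case (elim s)
      have "- beta * H_Lam J1 J2 L (glue L s w) \<le> \<bar>beta\<bar> * \<bar>H_Lam J1 J2 L (glue L s w)\<bar>"
        by (simp add: abs_mult[symmetric])
      also have "\<dots> \<le> \<bar>beta\<bar> * energy_bound J1 J2 L w"
        by (intro mult_left_mono abs_H_Lam_glue_le elim) simp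
      finally show ?case by simp
    qed
  qed measurable
qed

lemma boltzmann_integral_pos:
  assumes "finite L"
  shows "0 < (\<integral>s. exp (- beta * H_Lam J1 J2 L (glue L s w)) \<partial>PiM L (\<lambda>_. nu))"
proof -
  interpret P: prob_space "PiM L (\<lambda>_. nu)"
    by (rule prob_space_PiM_nu)
  have "(\<integral>s. exp (- \<bar>beta\<bar> * energy_bound J1 J2 L w) \<partial>PiM L (\<lambda>_. nu))
        \<le> (\<integral>s. exp (- beta * H_Lam J1 J2 L (glue L s w)) \<partial>PiM L (\<lambda>_. nu))"
  proof (rule integral_mono_AE[OF _ integrable_boltzmann[OF assms]])
    show "AE s in PiM L (\<lambda>_. nu). exp (- \<bar>beta\<bar> * energy_bound J1 J2 L w)
                                   \<le> exp (- beta * H_Lam J1 J2 L (glue L s w))"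
      using AE_PiM_nu_unit_spin[OF assms]
    proof eventually_elim
      case (elim s)
      have "beta * H_Lam J1 J2 L (glue L s w) \<le> \<bar>beta\<bar> * \<bar>H_Lam J1 J2 L (glue L s w)\<bar>"
        by (simp add: abs_mult[symmetric])
      also have "\<dots> \<le> \<bar>beta\<bar> * energy_bound J1 J2 L w"
        by (intro mult_left_mono abs_H_Lam_glue_le elim) simp
      finally show ?case by simp
    qed
  qed simp
  then show ?thesis
    by (simp add: P.prob_space) (meson exp_gt_zero less_le_trans)
qed

lemma gibbsD:
  assumes "gibbs J1 J2 beta mu"
  shows "prob_space mu" "sets mu = sets Omega"
    and "\<And>L A. finite L \<Longrightarrow> A \<in> sets Omega \<Longrightarrow>
           emeasure mu A = (\<integral>\<^sup>+ w. ennreal (spec J1 J2 beta L A w) \<partial>mu)"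
  using assms by (auto simp: gibbs_def)

text \<open>Not part of the definition of a Gibbs measure: it follows from the DLR equation for \<open>{r}\<close>.\<close>

lemma gibbs_AE_unit_spin:
  assumes "gibbs J1 J2 beta mu"
  shows "AE w in mu. unit_spin (w r)"
proof -
  interpret M: prob_space mu
    by (rule gibbsD(1)[OF assms])
  define A where "A = {w::config. unit_spin (w r)}"
  have "{w \<in> space Omega. unit_spin (w r)} \<in> sets Omega"
    by measurable
  then have A: "A \<in> sets Omega"
    by (simp add: A_def)
  have "spec J1 J2 beta {r} A w = 1" for w
  proof -
    let ?P = "PiM {r} (\<lambda>_. nu)"
    let ?F = "\<lambda>s. exp (- beta * H_Lam J1 J2 {r} (glue {r} s w))"
    have "(\<integral>s. indicator A (glue {r} s w) * ?F s \<partial>?P) = (\<integral>s. ?F s \<partial>?P)"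
    proof (rule integral_cong_AE)
      show "(\<lambda>s. indicator A (glue {r} s w) * ?F s) \<in> borel_measurable ?P"
        using measurable_compose[OF measurable_glue borel_measurable_indicator[OF A]] by measurable
      show "AE s in ?P. indicator A (glue {r} s w) * ?F s = ?F s"
        using AE_PiM_nu_unit_spin[of "{r}"] by (auto simp: A_def glue_def elim!: AE_mp)
    qed measurable
    then show ?thesis
      unfolding spec_def using boltzmann_integral_pos[of "{r}" beta J1 J2 w] by simp
  qed
  then have "emeasure mu A = 1"
    using gibbsD(3)[OF assms, of "{r}" A] A M.emeasure_space_1 by simp
  then have "AE w in mu. w \<in> A"
    by (intro M.AE_prob_1) (simp add: M.emeasure_eq_measure)
  then show ?thesis
    by (simp add: A_def)
qed

lemma gibbs_AE_all_unit_spin: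
  assumes "gibbs J1 J2 beta mu"
  shows "AE w in mu. \<forall>r. unit_spin (w r)"
  by (subst AE_all_countable) (auto intro: gibbs_AE_unit_spin[OF assms])

section \<open>Energy versus entropy\<close>

lemma boltzmann_integral_restrict_le:
  assumes L: "finite L" and beta: "0 \<le> beta"
    and low: "\<And>s. \<forall>t\<in>L. unit_spin (s t) \<Longrightarrow> glue L s w \<in> A \<Longrightarrow> Lb \<le> H_Lam J1 J2 L (glue L s w)"
  shows "(\<integral>s. indicator A (glue L s w) * exp (- beta * H_Lam J1 J2 L (glue L s w)) \<partial>PiM L (\<lambda>_. nu))
         \<le> exp (- beta * Lb)"
proof -
  let ?P = "PiM L (\<lambda>_. nu)"
  let ?f = "\<lambda>s. indicator A (glue L s w) * exp (- beta * H_Lam J1 J2 L (glue L s w))"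
  interpret P: prob_space ?P
    by (rule prob_space_PiM_nu)
  show ?thesis
  proof (cases "integrable ?P ?f")
    case True
    have "(\<integral>s. ?f s \<partial>?P) \<le> (\<integral>s. exp (- beta * Lb) \<partial>?P)"
    proof (rule integral_mono_AE[OF True])
      show "AE s in ?P. ?f s \<le> exp (- beta * Lb)"
        using AE_PiM_nu_unit_spin[OF L]
      proof eventually_elim
        case (elim s)
        show ?case
        proof (cases "glue L s w \<in> A")
          case True
          then have "beta * Lb \<le> beta * H_Lam J1 J2 L (glue L s w)"
            by (intro mult_left_mono low elim beta)
          then show ?thesis
            using True by simp
        qed simp
      qed
    qed simp
    then show ?thesis
      by (simp add: P.prob_space)
  qed (simp add: not_integrable_integral_eq)
qed

lemma boltzmann_integral_ge:
  assumes L: "finite L" and beta: "0 \<le> beta" and G: "G \<in> sets borel"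
    and up: "\<And>s. \<forall>t\<in>L. s t \<in> G \<Longrightarrow> H_Lam J1 J2 L (glue L s w) \<le> Ug"
  shows "exp (- beta * Ug) * measure nu G ^ card L
         \<le> (\<integral>s. exp (- beta * H_Lam J1 J2 L (glue L s w)) \<partial>PiM L (\<lambda>_. nu))"
proof -
  let ?P = "PiM L (\<lambda>_. nu)"
  interpret P: prob_space ?P
    by (rule prob_space_PiM_nu)
  interpret PS: product_sigma_finite "\<lambda>_::site. nu"
    by (simp add: product_sigma_finite_def prob_space_imp_sigma_finite prob_space_nu)
  define S where "S = PiE L (\<lambda>_. G)"
  have S: "S \<in> sets ?P"
    unfolding S_def using L G by (intro sets_PiM_I_finite) auto
  have "emeasure ?P S = (\<Prod>i\<in>L. emeasure nu G)"
    unfolding S_def using L G by (subst PS.emeasure_PiM) auto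
  then have "measure ?P S = measure nu G ^ card L"
    by (simp add: P.emeasure_eq_measure nu.emeasure_eq_measure prod_ennreal ennreal_power)
  moreover have "(\<integral>s. exp (- beta * Ug) * indicator S s \<partial>?P)
                 \<le> (\<integral>s. exp (- beta * H_Lam J1 J2 L (glue L s w)) \<partial>?P)"
  proof (rule integral_mono[OF _ integrable_boltzmann[OF L]])
    show "integrable ?P (\<lambda>s. exp (- beta * Ug) * indicator S s)"
      using S by (intro integrable_mult_right integrable_real_indicator) (auto simp: P.emeasure_finite less_top[symmetric])
    fix s
    show "exp (- beta * Ug) * indicator S s \<le> exp (- beta * H_Lam J1 J2 L (glue L s w))"
    proof (cases "s \<in> S")
      case True
      then have "beta * H_Lam J1 J2 L (glue L s w) \<le> beta * Ug"
        by (intro mult_left_mono up beta) (auto simp: S_def)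
      then show ?thesis
        using True by simp
    qed simp
  qed
  ultimately show ?thesis
    using S by simp
qed

lemma spec_le_energy_gap:
  assumes L: "finite L" and beta: "0 \<le> beta" and G: "G \<in> sets borel"
    and q: "0 < q" "q \<le> measure nu G"
    and low: "\<And>s. \<forall>t\<in>L. unit_spin (s t) \<Longrightarrow> glue L s w \<in> A \<Longrightarrow> Lb \<le> H_Lam J1 J2 L (glue L s w)"
    and up: "\<And>s. \<forall>t\<in>L. s t \<in> G \<Longrightarrow> H_Lam J1 J2 L (glue L s w) \<le> Ug"
  shows "spec J1 J2 beta L A w \<le> exp (- beta * (Lb - Ug)) / q ^ card L"
proof -
  let ?Z = "\<integral>s. exp (- beta * H_Lam J1 J2 L (glue L s w)) \<partial>PiM L (\<lambda>_. nu)"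
  have pos: "0 < exp (- beta * Ug) * q ^ card L"
    using q by simp
  have "exp (- beta * Ug) * q ^ card L \<le> exp (- beta * Ug) * measure nu G ^ card L"
    using q by (intro mult_left_mono power_mono) auto
  also have "\<dots> \<le> ?Z"
    by (rule boltzmann_integral_ge[OF L beta G up])
  finally have Z: "exp (- beta * Ug) * q ^ card L \<le> ?Z" .
  have "spec J1 J2 beta L A w \<le> exp (- beta * Lb) / ?Z"
    unfolding spec_def using boltzmann_integral_restrict_le[OF L beta low] Z pos
    by (intro divide_right_mono) auto
  also have "\<dots> \<le> exp (- beta * Lb) / (exp (- beta * Ug) * q ^ card L)"
    using Z pos by (intro divide_left_mono) auto
  also have "\<dots> = exp (- beta * (Lb - Ug)) / q ^ card L"
    by (simp add: exp_diff[symmetric] right_diff_distrib divide_divide_eq_left[symmetric])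
  finally show ?thesis .
qed

section \<open>Rows, columns and the box Hamiltonian\<close>

definition site_energy :: "real \<Rightarrow> real \<Rightarrow> spin \<Rightarrow> real" where
  "site_energy J1 J2 p = J1 * (fst p)\<^sup>2 + J2 * (snd p)\<^sup>2"

text \<open>A line of spins \<open>p 0, p 1, \<dots>\<close> whose bonds alternate between \<open>z\<close> (even bond index) and \<open>x\<close>
  (odd bond index), as along every row and column of the lattice. A row or column of the box is the
  chain \<open>p 1, \<dots>, p (2n)\<close>; its two end bonds reach the outside sites \<open>p 0\<close> and \<open>p (2n + 1)\<close>.\<close>

definition chain_bond :: "real \<Rightarrow> real \<Rightarrow> (nat \<Rightarrow> spin) \<Rightarrow> nat \<Rightarrow> real" where
  "chain_bond J1 J2 p i =
     (if odd i then - J1 * fst (p i) * fst (p (Suc i)) else - J2 * snd (p i) * snd (p (Suc i)))"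

definition chain_defect :: "real \<Rightarrow> real \<Rightarrow> (nat \<Rightarrow> spin) \<Rightarrow> nat \<Rightarrow> real" where
  "chain_defect J1 J2 p i =
     (if odd i then J1 * (fst (p i) - fst (p (Suc i)))\<^sup>2 else J2 * (snd (p i) - snd (p (Suc i)))\<^sup>2) / 2"

text \<open>Each inner site meets one bond of each kind, so it collects half of its site energy.\<close>

lemma sum_chain_bond_eq:
  "(\<Sum>i<Suc (2*n). chain_bond J1 J2 p i) =
     (\<Sum>i<Suc (2*n). chain_defect J1 J2 p i) - (\<Sum>i<2*n. site_energy J1 J2 (p (Suc i))) / 2
     - J2 * ((snd (p 0))\<^sup>2 + (snd (p (Suc (2*n))))\<^sup>2) / 2"
proof -
  define a where "a i = (if odd i then J1 * (fst (p i))\<^sup>2 else J2 * (snd (p i))\<^sup>2) / 2" for i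
  define b where "b i = (if odd i then J1 * (fst (p (Suc i)))\<^sup>2 else J2 * (snd (p (Suc i)))\<^sup>2) / 2" for i
  have bond: "chain_bond J1 J2 p i = chain_defect J1 J2 p i - a i - b i" for i
    by (simp add: chain_bond_def chain_defect_def a_def b_def power2_diff field_simps)
  have site: "a (Suc i) + b i = site_energy J1 J2 (p (Suc i)) / 2" for i
    by (simp add: a_def b_def site_energy_def add_divide_distrib)
  have "(\<Sum>i<Suc (2*n). a i + b i) = a 0 + (\<Sum>i<2*n. a (Suc i) + b i) + b (2*n)"
    by (simp only: sum.distrib sum.lessThan_Suc_shift[of a] sum.lessThan_Suc[of b])
  also have "\<dots> = (\<Sum>i<2*n. site_energy J1 J2 (p (Suc i))) / 2
                  + J2 * ((snd (p 0))\<^sup>2 + (snd (p (Suc (2*n))))\<^sup>2) / 2"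
    by (simp only: site) (simp add: sum_divide_distrib a_def b_def add_divide_distrib distrib_left)
  finally show ?thesis
    by (simp add: bond sum_subtractf sum.distrib[symmetric] algebra_simps)
qed

definition box :: "nat \<Rightarrow> site set" where
  "box n = {r. 0 \<le> fst r \<and> fst r < 2 * int n \<and> 0 \<le> snd r \<and> snd r < 2 * int n}"

lemma box_eq_image: "box n = (\<lambda>(x, y). (int x, int y)) ` ({..<2*n} \<times> {..<2*n})"
proof (intro equalityI subsetI)
  fix r :: site
  assume "r \<in> box n"
  then show "r \<in> (\<lambda>(x, y). (int x, int y)) ` ({..<2*n} \<times> {..<2*n})"
    by (intro image_eqI[where x="(nat (fst r), nat (snd r))"]) (auto simp: box_def)
qed (auto simp: box_def)

lemma finite_box [simp]: "finite (box n)"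
  by (simp add: box_eq_image)

lemma card_box: "card (box n) = 4 * n\<^sup>2"
proof -
  have "card (box n) = card ({..<2*n} \<times> {..<2*n})"
    unfolding box_eq_image by (rule card_image) (auto simp: inj_on_def)
  then show ?thesis
    by (simp add: power2_eq_square)
qed

lemma sum_box: "(\<Sum>r\<in>box n. g r) = (\<Sum>x<2*n. \<Sum>y<2*n. g (int x, int y))"
  unfolding box_eq_image
  by (subst sum.reindex) (auto simp: inj_on_def sum.cartesian_product split_def)

lemma hbond_eq_chain_bond: "hbond J1 J2 v (int i - 1, y) = chain_bond J1 J2 (\<lambda>i. v (int i - 1, y)) i"
  by (simp add: hbond_def chain_bond_def)

lemma vbond_eq_chain_bond: "vbond J1 J2 v (x, int j - 1) = chain_bond J1 J2 (\<lambda>j. v (x, int j - 1)) j"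
  by (simp add: vbond_def chain_bond_def)

lemma hbond_box_eq:
  "(\<Sum>r\<in>{r. r \<in> box n \<or> (fst r + 1, snd r) \<in> box n}. hbond J1 J2 v r)
   = (\<Sum>y<2*n. \<Sum>i<Suc (2*n). chain_bond J1 J2 (\<lambda>i. v (int i - 1, int y)) i)"
proof -
  have "{r. r \<in> box n \<or> (fst r + 1, snd r) \<in> box n}
        = (\<lambda>(i, y). (int i - 1, int y)) ` ({..<Suc (2*n)} \<times> {..<2*n})"
  proof (intro equalityI subsetI)
    fix r :: site
    assume "r \<in> {r. r \<in> box n \<or> (fst r + 1, snd r) \<in> box n}"
    then show "r \<in> (\<lambda>(i, y). (int i - 1, int y)) ` ({..<Suc (2*n)} \<times> {..<2*n})"
      by (intro image_eqI[where x="(nat (fst r + 1), nat (snd r))"]) (auto simp: box_def)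
  qed (auto simp: box_def)
  then have "(\<Sum>r\<in>{r. r \<in> box n \<or> (fst r + 1, snd r) \<in> box n}. hbond J1 J2 v r)
             = (\<Sum>(i, y)\<in>{..<Suc (2*n)} \<times> {..<2*n}. hbond J1 J2 v (int i - 1, int y))"
    by (simp add: sum.reindex inj_on_def split_def)
  also have "\<dots> = (\<Sum>i<Suc (2*n). \<Sum>y<2*n. hbond J1 J2 v (int i - 1, int y))"
    by (rule sum.cartesian_product[symmetric])
  finally show ?thesis
    by (subst (asm) sum.swap) (simp add: hbond_eq_chain_bond del: sum.lessThan_Suc)
qed

lemma vbond_box_eq:
  "(\<Sum>r\<in>{r. r \<in> box n \<or> (fst r, snd r + 1) \<in> box n}. vbond J1 J2 v r)
   = (\<Sum>x<2*n. \<Sum>j<Suc (2*n). chain_bond J1 J2 (\<lambda>j. v (int x, int j - 1)) j)"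
proof -
  have "{r. r \<in> box n \<or> (fst r, snd r + 1) \<in> box n}
        = (\<lambda>(x, j). (int x, int j - 1)) ` ({..<2*n} \<times> {..<Suc (2*n)})"
  proof (intro equalityI subsetI)
    fix r :: site
    assume "r \<in> {r. r \<in> box n \<or> (fst r, snd r + 1) \<in> box n}"
    then show "r \<in> (\<lambda>(x, j). (int x, int j - 1)) ` ({..<2*n} \<times> {..<Suc (2*n)})"
      by (intro image_eqI[where x="(nat (fst r), nat (snd r + 1))"]) (auto simp: box_def)
  qed (auto simp: box_def)
  then show ?thesis
    by (simp add: sum.reindex inj_on_def sum.cartesian_product split_def vbond_eq_chain_bond
        del: sum.lessThan_Suc)
qed

lemma H_Lam_box_eq:
  "H_Lam J1 J2 (box n) v =
     (\<Sum>y<2*n. \<Sum>i<Suc (2*n). chain_defect J1 J2 (\<lambda>i. v (int i - 1, int y)) i)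
   + (\<Sum>x<2*n. \<Sum>j<Suc (2*n). chain_defect J1 J2 (\<lambda>j. v (int x, int j - 1)) j)
   - (\<Sum>r\<in>box n. site_energy J1 J2 (v r))
   - J2 / 2 * (\<Sum>y<2*n. (snd (v (-1, int y)))\<^sup>2 + (snd (v (2 * int n, int y)))\<^sup>2)
   - J2 / 2 * (\<Sum>x<2*n. (snd (v (int x, -1)))\<^sup>2 + (snd (v (int x, 2 * int n)))\<^sup>2)"
proof -
  have rows: "(\<Sum>y<2*n. \<Sum>i<2*n. site_energy J1 J2 (v (int i, int y))) = (\<Sum>r\<in>box n. site_energy J1 J2 (v r))"
    unfolding sum_box by (rule sum.swap)
  have cols: "(\<Sum>x<2*n. \<Sum>j<2*n. site_energy J1 J2 (v (int x, int j))) = (\<Sum>r\<in>box n. site_energy J1 J2 (v r))"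
    by (simp add: sum_box)
  let ?Dh = "\<Sum>y<2*n. \<Sum>i<Suc (2*n). chain_defect J1 J2 (\<lambda>i. v (int i - 1, int y)) i"
  let ?Dv = "\<Sum>x<2*n. \<Sum>j<Suc (2*n). chain_defect J1 J2 (\<lambda>j. v (int x, int j - 1)) j"
  let ?S = "\<Sum>r\<in>box n. site_energy J1 J2 (v r)"
  let ?Bh = "\<Sum>y<2*n. (snd (v (-1, int y)))\<^sup>2 + (snd (v (2 * int n, int y)))\<^sup>2"
  let ?Bv = "\<Sum>x<2*n. (snd (v (int x, -1)))\<^sup>2 + (snd (v (int x, 2 * int n)))\<^sup>2"
  have "(\<Sum>y<2*n. \<Sum>i<Suc (2*n). chain_bond J1 J2 (\<lambda>i. v (int i - 1, int y)) i) = ?Dh - ?S / 2 - J2 / 2 * ?Bh"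
    unfolding sum_chain_bond_eq rows[symmetric]
    by (simp add: sum_subtractf sum_divide_distrib sum_distrib_left del: sum.lessThan_Suc)
  moreover have "(\<Sum>x<2*n. \<Sum>j<Suc (2*n). chain_bond J1 J2 (\<lambda>j. v (int x, int j - 1)) j) = ?Dv - ?S / 2 - J2 / 2 * ?Bv"
    unfolding sum_chain_bond_eq cols[symmetric]
    by (simp add: sum_subtractf sum_divide_distrib sum_distrib_left del: sum.lessThan_Suc)
  ultimately show ?thesis
    unfolding H_Lam_def hbond_box_eq vbond_box_eq by simp
qed

lemma chain_defect_nonneg: "0 \<le> J1 \<Longrightarrow> 0 \<le> J2 \<Longrightarrow> 0 \<le> chain_defect J1 J2 p i"
  by (simp add: chain_defect_def)

lemma sum_ends_interior_le:
  fixes f :: "nat \<Rightarrow> real"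
  assumes "1 \<le> n" "0 \<le> \<kappa>" "f 0 \<le> K" "f (2*n) \<le> K" "\<And>i. 0 < i \<Longrightarrow> i < 2*n \<Longrightarrow> f i \<le> \<kappa>"
  shows "(\<Sum>i<Suc (2*n). f i) \<le> 2 * K + 2 * real n * \<kappa>"
proof -
  define m where "m = 2 * n - 1"
  have m: "2 * n = Suc m"
    using assms(1) by (simp add: m_def)
  have "(\<Sum>i<m. f (Suc i)) \<le> real m * \<kappa>"
    using sum_bounded_above[of "{..<m}" "\<lambda>i. f (Suc i)" \<kappa>] assms(5) m by simp
  also have "\<dots> \<le> 2 * real n * \<kappa>"
    using m assms(2) by (intro mult_right_mono) (auto simp flip: of_nat_mult)
  finally have "(\<Sum>i<m. f (Suc i)) \<le> 2 * real n * \<kappa>" .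
  moreover have "(\<Sum>i<Suc (2*n). f i) = f 0 + (\<Sum>i<m. f (Suc i)) + f (2*n)"
    unfolding sum.lessThan_Suc[of f "2*n"] unfolding m sum.lessThan_Suc_shift ..
  ultimately show ?thesis
    using assms(3,4) by linarith
qed

lemma sum_chain_defect_le:
  assumes J: "0 \<le> J1" "0 \<le> J2" and n: "1 \<le> n"
    and unit: "\<And>i. unit_spin (p i)"
    and near: "\<And>i. 0 < i \<Longrightarrow> i \<le> 2*n \<Longrightarrow> \<bar>fst (p i) - fst c\<bar> \<le> \<eta> \<and> \<bar>snd (p i) - snd c\<bar> \<le> \<eta>"
  shows "(\<Sum>i<Suc (2*n). chain_defect J1 J2 p i) \<le> 4 * J2 + 4 * real n * (J1 + J2) * \<eta>\<^sup>2"
proof -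
  have sq_diff: "(a - b)\<^sup>2 \<le> 4 * \<eta>\<^sup>2" if "\<bar>a - d\<bar> \<le> \<eta>" "\<bar>b - d\<bar> \<le> \<eta>" for a b d :: real
  proof -
    have "\<bar>a - b\<bar> \<le> 2 * \<eta>"
      using that by linarith
    then have "\<bar>a - b\<bar>\<^sup>2 \<le> (2 * \<eta>)\<^sup>2"
      by (intro power_mono) auto
    then show ?thesis
      by (simp add: power_mult_distrib)
  qed
  have end_bond: "chain_defect J1 J2 p i \<le> 2 * J2" if "even i" for i
  proof -
    have "\<bar>snd (p i) - snd (p (Suc i))\<bar> \<le> 2"
      using unit_spin_bounds(2)[OF unit[of i]] unit_spin_bounds(2)[OF unit[of "Suc i"]] by linarith
    then have "\<bar>snd (p i) - snd (p (Suc i))\<bar>\<^sup>2 \<le> 2\<^sup>2"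
      by (intro power_mono) auto
    then have "J2 * (snd (p i) - snd (p (Suc i)))\<^sup>2 \<le> J2 * 4"
      using J by (intro mult_left_mono) auto
    then show ?thesis
      using that by (simp add: chain_defect_def)
  qed
  have inner_bond: "chain_defect J1 J2 p i \<le> 2 * (J1 + J2) * \<eta>\<^sup>2" if "0 < i" "i < 2*n" for i
  proof -
    have "(fst (p i) - fst (p (Suc i)))\<^sup>2 \<le> 4 * \<eta>\<^sup>2" "(snd (p i) - snd (p (Suc i)))\<^sup>2 \<le> 4 * \<eta>\<^sup>2"
      using near[of i] near[of "Suc i"] that by (auto intro: sq_diff)
    then have "J1 * (fst (p i) - fst (p (Suc i)))\<^sup>2 \<le> (J1 + J2) * (4 * \<eta>\<^sup>2)"
              "J2 * (snd (p i) - snd (p (Suc i)))\<^sup>2 \<le> (J1 + J2) * (4 * \<eta>\<^sup>2)"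
      using J by (auto intro!: mult_mono)
    then show ?thesis
      by (simp add: chain_defect_def algebra_simps)
  qed
  show ?thesis
    using sum_ends_interior_le[OF n, of "2 * (J1 + J2) * \<eta>\<^sup>2" "chain_defect J1 J2 p" "2 * J2"]
      J end_bond inner_bond by (simp add: algebra_simps)
qed

lemma H_Lam_box_lower:
  assumes J: "0 \<le> J1" "0 \<le> J2" and unit: "\<And>r. unit_spin (v r)"
  shows "- (\<Sum>r\<in>box n. site_energy J1 J2 (v r)) - 4 * real n * J2 \<le> H_Lam J1 J2 (box n) v"
proof -
  have two: "(snd (v r))\<^sup>2 + (snd (v r'))\<^sup>2 \<le> 2" for r r'
    using unit_spin_bounds(4)[OF unit, of r] unit_spin_bounds(4)[OF unit, of r'] by linarith
  have "(\<Sum>y<2*n. (snd (v (-1, int y)))\<^sup>2 + (snd (v (2 * int n, int y)))\<^sup>2) \<le> (\<Sum>y<2*n. 2)"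
       "(\<Sum>x<2*n. (snd (v (int x, -1)))\<^sup>2 + (snd (v (int x, 2 * int n)))\<^sup>2) \<le> (\<Sum>x<2*n. 2)"
    by (rule sum_mono, rule two)+
  then have "J2 / 2 * (\<Sum>y<2*n. (snd (v (-1, int y)))\<^sup>2 + (snd (v (2 * int n, int y)))\<^sup>2) \<le> J2 / 2 * (4 * real n)"
            "J2 / 2 * (\<Sum>x<2*n. (snd (v (int x, -1)))\<^sup>2 + (snd (v (int x, 2 * int n)))\<^sup>2) \<le> J2 / 2 * (4 * real n)"
    using J by (simp_all only: sum_constant card_lessThan) (intro mult_left_mono; simp)+
  moreover have "0 \<le> (\<Sum>y<2*n. \<Sum>i<Suc (2*n). chain_defect J1 J2 (\<lambda>i. v (int i - 1, int y)) i)"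
                "0 \<le> (\<Sum>x<2*n. \<Sum>j<Suc (2*n). chain_defect J1 J2 (\<lambda>j. v (int x, int j - 1)) j)"
    using chain_defect_nonneg[OF J] by (simp_all add: sum_nonneg del: sum.lessThan_Suc)
  moreover have "J2 / 2 * (4 * real n) = 2 * real n * J2"
    by simp
  ultimately show ?thesis
    unfolding H_Lam_box_eq by linarith
qed

lemma site_energy_near:
  assumes J: "0 \<le> J1" "0 \<le> J2" and "unit_spin p" "unit_spin c"
    and "\<bar>fst p - fst c\<bar> \<le> \<eta>" "\<bar>snd p - snd c\<bar> \<le> \<eta>"
  shows "site_energy J1 J2 c - 2 * (J1 + J2) * \<eta> \<le> site_energy J1 J2 p"
proof -
  have sq: "b\<^sup>2 - 2 * \<eta> \<le> a\<^sup>2" if "\<bar>a\<bar> \<le> 1" "\<bar>b\<bar> \<le> 1" "\<bar>a - b\<bar> \<le> \<eta>" for a b :: real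
  proof -
    have "\<bar>b\<^sup>2 - a\<^sup>2\<bar> = \<bar>a - b\<bar> * \<bar>a + b\<bar>"
      by (simp add: power2_eq_square abs_mult[symmetric] algebra_simps)
    also have "\<dots> \<le> \<eta> * 2"
      using that by (intro mult_mono) auto
    finally show ?thesis
      by linarith
  qed
  have "J1 * ((fst c)\<^sup>2 - 2 * \<eta>) \<le> J1 * (fst p)\<^sup>2" "J2 * ((snd c)\<^sup>2 - 2 * \<eta>) \<le> J2 * (snd p)\<^sup>2"
    using J assms(5,6) unit_spin_bounds(1,2)[OF assms(3)] unit_spin_bounds(1,2)[OF assms(4)]
    by (simp_all add: mult_left_mono sq)
  then show ?thesis
    by (simp add: site_energy_def algebra_simps)
qed

lemma H_Lam_box_upper:
  assumes J: "0 \<le> J1" "0 \<le> J2" and n: "1 \<le> n" and unit: "\<And>r. unit_spin (v r)" and c: "unit_spin c"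
    and near: "\<And>r. r \<in> box n \<Longrightarrow> \<bar>fst (v r) - fst c\<bar> \<le> \<eta> \<and> \<bar>snd (v r) - snd c\<bar> \<le> \<eta>"
  shows "H_Lam J1 J2 (box n) v
         \<le> 16 * real n * J2 + 16 * (real n)\<^sup>2 * (J1 + J2) * \<eta>\<^sup>2
            - 4 * (real n)\<^sup>2 * (site_energy J1 J2 c - 2 * (J1 + J2) * \<eta>)"
proof -
  let ?c = "4 * J2 + 4 * real n * (J1 + J2) * \<eta>\<^sup>2"
  have "(\<Sum>i<Suc (2*n). chain_defect J1 J2 (\<lambda>i. v (int i - 1, int y)) i) \<le> ?c"
       "(\<Sum>j<Suc (2*n). chain_defect J1 J2 (\<lambda>j. v (int x, int j - 1)) j) \<le> ?c"
    if "x < 2*n" "y < 2*n" for x y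
  proof -
    have "\<And>i. 0 < i \<Longrightarrow> i \<le> 2*n \<Longrightarrow> (int i - 1, int y) \<in> box n \<and> (int x, int i - 1) \<in> box n"
      using that by (simp add: box_def)
    then show "(\<Sum>i<Suc (2*n). chain_defect J1 J2 (\<lambda>i. v (int i - 1, int y)) i) \<le> ?c"
              "(\<Sum>j<Suc (2*n). chain_defect J1 J2 (\<lambda>j. v (int x, int j - 1)) j) \<le> ?c"
      by (intro sum_chain_defect_le[where c=c, OF J n] unit near; blast)+
  qed
  then have "(\<Sum>y<2*n. \<Sum>i<Suc (2*n). chain_defect J1 J2 (\<lambda>i. v (int i - 1, int y)) i) \<le> (\<Sum>y<2*n. ?c)"
            "(\<Sum>x<2*n. \<Sum>j<Suc (2*n). chain_defect J1 J2 (\<lambda>j. v (int x, int j - 1)) j) \<le> (\<Sum>x<2*n. ?c)"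
    by (intro sum_mono; simp del: sum.lessThan_Suc)+
  moreover have "0 \<le> J2 / 2 * (\<Sum>y<2*n. (snd (v (-1, int y)))\<^sup>2 + (snd (v (2 * int n, int y)))\<^sup>2)"
                "0 \<le> J2 / 2 * (\<Sum>x<2*n. (snd (v (int x, -1)))\<^sup>2 + (snd (v (int x, 2 * int n)))\<^sup>2)"
    using J by (simp_all add: sum_nonneg)
  moreover have "(\<Sum>x<2*n. ?c) = 8 * real n * J2 + 8 * (real n)\<^sup>2 * (J1 + J2) * \<eta>\<^sup>2"
    by (simp add: algebra_simps power2_eq_square)
  moreover have "4 * (real n)\<^sup>2 * (site_energy J1 J2 c - 2 * (J1 + J2) * \<eta>)
                 \<le> (\<Sum>r\<in>box n. site_energy J1 J2 (v r))"
    using sum_bounded_below[of "box n" "site_energy J1 J2 c - 2 * (J1 + J2) * \<eta>"]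
      site_energy_near[OF J unit c] near by (simp add: card_box)
  ultimately show ?thesis
    unfolding H_Lam_box_eq by linarith
qed

section \<open>Improbability of a large deficit in a box\<close>

lemma exp_gap_div_power_le:
  assumes "real N * x \<le> gap" "exp (- beta * x) \<le> eps * q" "0 \<le> beta" "0 < q" "eps \<le> 1" "1 \<le> N"
  shows "exp (- beta * gap) / q ^ N \<le> eps"
proof -
  have "0 < eps * q"
    using assms(2) exp_gt_zero[of "- beta * x"] by linarith
  then have eps: "0 \<le> eps"
    using assms(4) by (simp add: zero_less_mult_iff)
  have "exp (- beta * gap) / q ^ N \<le> exp (- beta * (real N * x)) / q ^ N"
    using assms by (intro divide_right_mono) (auto intro: mult_left_mono)
  also have "\<dots> = (exp (- beta * x) / q) ^ N"
    by (simp add: exp_of_nat_mult[symmetric] power_divide algebra_simps)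
  also have "\<dots> \<le> eps ^ N"
    using assms by (intro power_mono) (auto simp: pos_divide_le_eq)
  also have "\<dots> \<le> eps"
    using eps assms(5,6) by (simp add: power_le_one_iff power_decreasing[of 1 N eps, simplified])
  finally show ?thesis .
qed

lemma box_energy_gap:
  fixes n :: nat and J1 J2 c \<eta> :: real
  assumes J: "0 \<le> J1" "0 \<le> J2" and \<eta>: "0 \<le> \<eta>" "\<eta> \<le> 1" "24 * (J1 + J2) * \<eta> \<le> c"
    and n: "20 * J2 \<le> real n * c"
  shows "4 * (real n)\<^sup>2 * (c / 2)
         \<le> 4 * (real n)\<^sup>2 * (c - 2 * (J1 + J2) * \<eta>) - 20 * real n * J2 - 16 * (real n)\<^sup>2 * (J1 + J2) * \<eta>\<^sup>2"
proof -
  have "\<eta>\<^sup>2 \<le> \<eta>"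
    using \<eta> by (simp add: power2_eq_square mult_left_le)
  then have "(real n)\<^sup>2 * ((J1 + J2) * \<eta>\<^sup>2) \<le> (real n)\<^sup>2 * ((J1 + J2) * \<eta>)"
    using J by (intro mult_left_mono) auto
  moreover have "(real n)\<^sup>2 * (24 * (J1 + J2) * \<eta>) \<le> (real n)\<^sup>2 * c"
    using \<eta>(3) by (intro mult_left_mono) auto
  moreover have "real n * (20 * J2) \<le> real n * (real n * c)"
    using n by (intro mult_left_mono) auto
  ultimately show ?thesis
    by (simp add: algebra_simps power2_eq_square)
qed

lemma spec_box_deficit_le:
  fixes J1 J2 :: real and \<theta> c \<eta> eps beta :: real and n :: nat
  defines "M \<equiv> site_energy J1 J2 (cos \<theta>, sin \<theta>)"
  assumes J: "0 \<le> J1" "0 \<le> J2"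
    and \<theta>: "0 \<le> \<theta>" "\<theta> \<le> pi"
    and \<eta>: "0 < \<eta>" "\<eta> \<le> 1" "24 * (J1 + J2) * \<eta> \<le> c"
    and n: "1 \<le> n" "20 * J2 \<le> real n * c"
    and eps: "eps \<le> 1"
    and beta: "0 \<le> beta" "exp (- beta * (c / 2)) \<le> eps * (\<eta> / (2 * pi))"
    and w: "\<And>r. unit_spin (w r)"
  shows "spec J1 J2 beta (box n) {w. c * card (box n) < (\<Sum>t\<in>box n. M - site_energy J1 J2 (w t))} w \<le> eps"
proof -
  define N where "N = 4 * (real n)\<^sup>2"
  let ?G = "spin_nbhd \<eta> (cos \<theta>, sin \<theta>)"
  let ?Lb = "N * (c - M) - 4 * real n * J2"
  let ?Ug = "16 * real n * J2 + 16 * (real n)\<^sup>2 * (J1 + J2) * \<eta>\<^sup>2 - N * (M - 2 * (J1 + J2) * \<eta>)"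
  have glue_unit: "unit_spin (glue (box n) s w r)" if "\<forall>t\<in>box n. unit_spin (s t)" for s r
    using that w by (simp add: glue_def)
  have "spec J1 J2 beta (box n) {w. c * card (box n) < (\<Sum>t\<in>box n. M - site_energy J1 J2 (w t))} w
        \<le> exp (- beta * (?Lb - ?Ug)) / (\<eta> / (2 * pi)) ^ card (box n)"
  proof (rule spec_le_energy_gap[OF finite_box beta(1) spin_nbhd_borel])
    show "0 < \<eta> / (2 * pi)" "\<eta> / (2 * pi) \<le> measure nu ?G"
      using \<eta> \<theta> pi_gt3 by (auto intro!: measure_nu_spin_nbhd)
  next
    fix s
    assume unit: "\<forall>t\<in>box n. unit_spin (s t)"
      and "glue (box n) s w \<in> {w. c * card (box n) < (\<Sum>t\<in>box n. M - site_energy J1 J2 (w t))}"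
    then have "N * (c - M) < - (\<Sum>r\<in>box n. site_energy J1 J2 (glue (box n) s w r))"
      by (simp add: N_def card_box sum_subtractf algebra_simps)
    moreover have "- (\<Sum>r\<in>box n. site_energy J1 J2 (glue (box n) s w r)) - 4 * real n * J2
                   \<le> H_Lam J1 J2 (box n) (glue (box n) s w)"
      by (rule H_Lam_box_lower[OF J]) (rule glue_unit[OF unit])
    ultimately show "?Lb \<le> H_Lam J1 J2 (box n) (glue (box n) s w)"
      by linarith
  next
    fix s
    assume good: "\<forall>t\<in>box n. s t \<in> ?G"
    then have "unit_spin (glue (box n) s w r)" for r
      by (intro glue_unit) (simp add: spin_nbhd_def)
    moreover have "\<bar>fst (glue (box n) s w r) - cos \<theta>\<bar> \<le> \<eta> \<and> \<bar>snd (glue (box n) s w r) - sin \<theta>\<bar> \<le> \<eta>"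
      if "r \<in> box n" for r
      using good that by (simp add: glue_def spin_nbhd_def)
    ultimately show "H_Lam J1 J2 (box n) (glue (box n) s w) \<le> ?Ug"
      unfolding N_def M_def by (intro H_Lam_box_upper[OF J n(1)]) auto
  qed
  also have "\<dots> \<le> eps"
  proof (rule exp_gap_div_power_le[OF _ beta(2) beta(1) _ eps])
    show "real (card (box n)) * (c / 2) \<le> ?Lb - ?Ug"
      using box_energy_gap[OF J less_imp_le[OF \<eta>(1)] \<eta>(2,3) n(2)] by (simp add: N_def card_box algebra_simps)
    show "0 < \<eta> / (2 * pi)" "1 \<le> card (box n)"
      using \<eta> n by (auto simp: card_box)
  qed
  finally show ?thesis .
qed

section \<open>From the box to a single site\<close>

lemma gibbs_measure_le_of_spec_le:
  assumes g: "gibbs J1 J2 beta mu" and L: "finite L" and B: "B \<in> sets Omega" and eps: "0 \<le> eps"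
    and spec: "\<And>w. (\<And>r. unit_spin (w r)) \<Longrightarrow> spec J1 J2 beta L B w \<le> eps"
  shows "measure mu B \<le> eps"
proof -
  interpret M: prob_space mu
    by (rule gibbsD(1)[OF g])
  have "emeasure mu B = (\<integral>\<^sup>+ w. ennreal (spec J1 J2 beta L B w) \<partial>mu)"
    by (rule gibbsD(3)[OF g L B])
  also have "\<dots> \<le> (\<integral>\<^sup>+ w. ennreal eps \<partial>mu)"
    using gibbs_AE_all_unit_spin[OF g]
  proof (intro nn_integral_mono_AE, eventually_elim)
    case (elim w)
    then show ?case
      by (intro ennreal_leI spec) blast
  qed
  also have "\<dots> = ennreal eps"
    using M.emeasure_space_1 by simp
  finally show ?thesis
    using eps by (simp add: M.emeasure_eq_measure)
qed

lemma integrable_gibbs_spin: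
  fixes f :: "spin \<Rightarrow> real"
  assumes g: "gibbs J1 J2 beta mu" and f: "f \<in> borel_measurable borel"
    and bound: "\<And>p. unit_spin p \<Longrightarrow> \<bar>f p\<bar> \<le> b"
  shows "integrable mu (\<lambda>w. f (w r))"
proof -
  interpret M: prob_space mu
    by (rule gibbsD(1)[OF g])
  show ?thesis
  proof (rule M.integrable_const_bound[where B=b])
    show "AE w in mu. norm (f (w r)) \<le> b"
      using gibbs_AE_unit_spin[OF g, of r] by (auto intro: bound)
    show "(\<lambda>w. f (w r)) \<in> borel_measurable mu"
      using borel_measurable_Omega_spin[OF f] gibbsD(2)[OF g] by (simp cong: measurable_cong_sets)
  qed
qed

lemma shift_measurable: "shift1 \<in> measurable Omega Omega" "shift2 \<in> measurable Omega Omega"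
  unfolding shift1_def shift2_def Omega_def
  by (rule measurable_PiM_single', auto intro!: measurable_component_singleton)+

lemma integral_shift_eq:
  fixes g :: "spin \<Rightarrow> real"
  assumes TI: "transl_inv mu" and sets: "sets mu = sets Omega" and g: "g \<in> borel_measurable borel"
  shows "(\<integral>w. g (w (a + 2, b)) \<partial>mu) = (\<integral>w. g (w (a, b)) \<partial>mu)"
    and "(\<integral>w. g (w (a, b + 2)) \<partial>mu) = (\<integral>w. g (w (a, b)) \<partial>mu)"
proof -
  have gO: "(\<lambda>w. g (w (a, b))) \<in> borel_measurable Omega"
    by (rule borel_measurable_Omega_spin[OF g])
  have m: "shift1 \<in> measurable mu Omega" "shift2 \<in> measurable mu Omega"
    using shift_measurable sets by (simp_all cong: measurable_cong_sets)
  have "(\<integral>w. g (w (a, b)) \<partial>mu) = (\<integral>w. g (w (a, b)) \<partial>distr mu Omega shift1)"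
    using TI by (simp add: transl_inv_def)
  also have "\<dots> = (\<integral>w. g (shift1 w (a, b)) \<partial>mu)"
    by (rule integral_distr[OF m(1) gO])
  finally show "(\<integral>w. g (w (a + 2, b)) \<partial>mu) = (\<integral>w. g (w (a, b)) \<partial>mu)"
    by (simp add: shift1_def)
  have "(\<integral>w. g (w (a, b)) \<partial>mu) = (\<integral>w. g (w (a, b)) \<partial>distr mu Omega shift2)"
    using TI by (simp add: transl_inv_def)
  also have "\<dots> = (\<integral>w. g (shift2 w (a, b)) \<partial>mu)"
    by (rule integral_distr[OF m(2) gO])
  finally show "(\<integral>w. g (w (a, b + 2)) \<partial>mu) = (\<integral>w. g (w (a, b)) \<partial>mu)"
    by (simp add: shift2_def)
qed

lemma periodic_int_2:
  fixes F :: "int \<Rightarrow> 'a"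
  assumes "\<And>a. F (a + 2) = F a"
  shows "F (a + 2 * k) = F a"
proof (induction k rule: int_induct[where k=0])
  case (step1 i)
  then show ?case
    using assms[of "a + 2 * i"] by (simp add: algebra_simps)
next
  case (step2 i)
  then show ?case
    using assms[of "a + 2 * (i - 1)"] by (simp add: algebra_simps)
qed simp

lemma integral_periodic:
  fixes g :: "spin \<Rightarrow> real"
  assumes TI: "transl_inv mu" and sets: "sets mu = sets Omega" and g: "g \<in> borel_measurable borel"
  shows "(\<integral>w. g (w (a + 2 * k, b + 2 * l)) \<partial>mu) = (\<integral>w. g (w (a, b)) \<partial>mu)"
  using periodic_int_2[of "\<lambda>y. \<integral>w. g (w (a + 2 * k, y)) \<partial>mu" b l]
    periodic_int_2[of "\<lambda>x. \<integral>w. g (w (x, b)) \<partial>mu" a k]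
    integral_shift_eq[OF TI sets g] by simp

lemma sum_box_integral_le:
  fixes f :: "spin \<Rightarrow> real" and b c eps :: real
  assumes g: "gibbs J1 J2 beta mu" and f: "f \<in> borel_measurable borel"
    and bound: "\<And>p. unit_spin p \<Longrightarrow> 0 \<le> f p \<and> f p \<le> b" and c: "0 \<le> c"
    and event: "measure mu {w. c * card (box n) < (\<Sum>t\<in>box n. f (w t))} \<le> eps"
  shows "(\<Sum>t\<in>box n. \<integral>w. f (w t) \<partial>mu) \<le> card (box n) * (c + b * eps)"
proof -
  interpret M: prob_space mu
    by (rule gibbsD(1)[OF g])
  define N where "N = real (card (box n))"
  define B where "B = {w. c * N < (\<Sum>t\<in>box n. f (w t))}"
  have b: "0 \<le> b"
    using bound[of "(1, 0)"] by simp
  have "{w \<in> space Omega. c * N < (\<Sum>t\<in>box n. f (w t))} \<in> sets Omega"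
    using borel_measurable_Omega_spin[OF f] by measurable
  then have B_sets: "B \<in> sets mu"
    using gibbsD(2)[OF g] by (simp add: B_def)
  have int: "integrable mu (\<lambda>w. f (w t))" for t
    using bound by (intro integrable_gibbs_spin[OF g f, where b=b]) auto
  have int_B: "integrable mu (\<lambda>w. c * N + b * N * indicator B w)"
    using B_sets by (intro Bochner_Integration.integrable_add integrable_mult_right integrable_real_indicator)
      (auto simp: less_top[symmetric] M.emeasure_finite)
  have "(\<Sum>t\<in>box n. \<integral>w. f (w t) \<partial>mu) = (\<integral>w. (\<Sum>t\<in>box n. f (w t)) \<partial>mu)"
    using int by (simp add: Bochner_Integration.integral_sum)
  also have "\<dots> \<le> (\<integral>w. c * N + b * N * indicator B w \<partial>mu)"
  proof (rule integral_mono_AE[OF _ int_B])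
    show "integrable mu (\<lambda>w. \<Sum>t\<in>box n. f (w t))"
      using int by simp
    show "AE w in mu. (\<Sum>t\<in>box n. f (w t)) \<le> c * N + b * N * indicator B w"
      using gibbs_AE_all_unit_spin[OF g]
    proof eventually_elim
      case (elim w)
      have "(\<Sum>t\<in>box n. f (w t)) \<le> b * N"
        using sum_bounded_above[of "box n" "\<lambda>t. f (w t)" b] bound elim by (simp add: N_def mult.commute)
      moreover have "0 \<le> c * N"
        using c by (simp add: N_def)
      ultimately show ?case
        by (cases "w \<in> B") (auto simp: B_def)
    qed
  qed
  also have "\<dots> = c * N + b * N * measure mu B"
    using B_sets by (simp add: M.emeasure_finite less_top[symmetric] M.prob_space)
  also have "\<dots> \<le> c * N + b * N * eps"
    using event b by (intro add_left_mono mult_left_mono) (auto simp: B_def N_def)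
  finally show ?thesis
    by (simp add: N_def algebra_simps)
qed

text \<open>By periodicity the box contains \<open>n\<^sup>2\<close> translates of \<open>r\<close> by multiples of \<open>2\<close>.\<close>

lemma integral_le_sum_box:
  fixes f :: "spin \<Rightarrow> real"
  assumes g: "gibbs J1 J2 beta mu" and TI: "transl_inv mu" and f: "f \<in> borel_measurable borel"
    and nonneg: "\<And>p. unit_spin p \<Longrightarrow> 0 \<le> f p"
  shows "(real n)\<^sup>2 * (\<integral>w. f (w r) \<partial>mu) \<le> (\<Sum>t\<in>box n. \<integral>w. f (w t) \<partial>mu)"
proof -
  define E where "E t = (\<integral>w. f (w t) \<partial>mu)" for t
  define x0 y0 where "x0 = fst r mod 2" and "y0 = snd r mod 2"
  define S where "S = (\<lambda>(a, b). (x0 + 2 * int a, y0 + 2 * int b)) ` ({..<n} \<times> {..<n})"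
  have E_S: "E (x0 + 2 * k, y0 + 2 * l) = E r" for k l
  proof -
    have "E (x0 + 2 * k, y0 + 2 * l) = E (x0, y0)"
      unfolding E_def by (rule integral_periodic[OF TI gibbsD(2)[OF g] f])
    also have "\<dots> = E (x0 + 2 * (fst r div 2), y0 + 2 * (snd r div 2))"
      unfolding E_def by (rule integral_periodic[OF TI gibbsD(2)[OF g] f, symmetric])
    also have "(x0 + 2 * (fst r div 2), y0 + 2 * (snd r div 2)) = r"
      by (simp add: x0_def y0_def prod_eq_iff)
    finally show ?thesis .
  qed
  have "(real n)\<^sup>2 * E r = (\<Sum>t\<in>S. E t)"
    unfolding S_def by (subst sum.reindex) (auto simp: inj_on_def split_def E_S power2_eq_square)
  also have "\<dots> \<le> (\<Sum>t\<in>box n. E t)"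
  proof (rule sum_mono2)
    show "S \<subseteq> box n"
      by (auto simp: S_def box_def x0_def y0_def)
    show "0 \<le> E t" for t
      unfolding E_def using gibbs_AE_unit_spin[OF g, of t]
      by (intro integral_nonneg_AE) (auto elim: AE_mp intro: nonneg)
  qed simp
  finally show ?thesis
    by (simp add: E_def)
qed

lemma integral_le_of_box_event:
  fixes f :: "spin \<Rightarrow> real" and b c eps :: real
  assumes g: "gibbs J1 J2 beta mu" and TI: "transl_inv mu" and f: "f \<in> borel_measurable borel"
    and bound: "\<And>p. unit_spin p \<Longrightarrow> 0 \<le> f p \<and> f p \<le> b" and c: "0 \<le> c" and n: "1 \<le> n"
    and event: "measure mu {w. c * card (box n) < (\<Sum>t\<in>box n. f (w t))} \<le> eps"
  shows "(\<integral>w. f (w r) \<partial>mu) \<le> 4 * (c + b * eps)"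
proof -
  have "(real n)\<^sup>2 * (\<integral>w. f (w r) \<partial>mu) \<le> (\<Sum>t\<in>box n. \<integral>w. f (w t) \<partial>mu)"
    using bound by (intro integral_le_sum_box[OF g TI f]) auto
  also have "\<dots> \<le> card (box n) * (c + b * eps)"
    by (rule sum_box_integral_le[OF g f bound c event])
  also have "\<dots> = (real n)\<^sup>2 * (4 * (c + b * eps))"
    by (simp add: card_box)
  finally show ?thesis
    using n by simp
qed

section \<open>Low temperature\<close>

lemma exp_neg_le_of_abs_ln_le:
  fixes x a beta :: real
  assumes "0 < x" "0 < a" "\<bar>ln a\<bar> / x \<le> beta"
  shows "0 \<le> beta" "exp (- beta * x) \<le> a"
proof -
  have "\<bar>ln a\<bar> \<le> beta * x"
    using assms by (simp add: pos_divide_le_eq)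
  then have "0 \<le> beta * x" "- beta * x \<le> ln a"
    by linarith+
  then show "0 \<le> beta" "exp (- beta * x) \<le> a"
    using assms(1,2) by (simp_all add: zero_le_mult_iff) (metis exp_le_cancel_iff exp_ln)
qed

lemma borel_measurable_site_energy [measurable]: "site_energy J1 J2 \<in> borel_measurable borel"
  unfolding site_energy_def by measurable

lemma site_energy_le: "0 \<le> J1 \<Longrightarrow> 0 \<le> J2 \<Longrightarrow> unit_spin p \<Longrightarrow> site_energy J1 J2 p \<le> J1 + J2"
  using unit_spin_bounds(3,4)[of p] by (simp add: site_energy_def add_mono mult_left_le)

lemma site_energy_nonneg: "0 \<le> J1 \<Longrightarrow> 0 \<le> J2 \<Longrightarrow> 0 \<le> site_energy J1 J2 p"
  by (simp add: site_energy_def)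

lemma low_temperature_site_energy:
  fixes J1 J2 \<theta> \<delta> :: real
  defines "M \<equiv> site_energy J1 J2 (cos \<theta>, sin \<theta>)"
  assumes J: "0 < J1" "0 < J2" and \<theta>: "0 \<le> \<theta>" "\<theta> \<le> pi"
    and max: "\<And>p. unit_spin p \<Longrightarrow> site_energy J1 J2 p \<le> M" and \<delta>: "0 < \<delta>"
  shows "\<exists>beta0. \<forall>beta\<ge>beta0. \<forall>mu. gibbs J1 J2 beta mu \<and> transl_inv mu \<longrightarrow>
           (\<forall>r. M - \<delta> \<le> (\<integral>w. site_energy J1 J2 (w r) \<partial>mu))"
proof -
  define c where "c = \<delta> / 8"
  define eps where "eps = min 1 (\<delta> / (8 * (J1 + J2)))"
  define \<eta> where "\<eta> = min 1 (c / (24 * (J1 + J2)))"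
  define n where "n = nat \<lceil>20 * J2 / c\<rceil> + 1"
  define a where "a = eps * (\<eta> / (2 * pi))"
  have c: "0 < c" and eps: "0 < eps" "eps \<le> 1" and "0 < \<eta>" "\<eta> \<le> 1"
    using J \<delta> by (auto simp: c_def eps_def \<eta>_def)
  have "(J1 + J2) * eps \<le> (J1 + J2) * (\<delta> / (8 * (J1 + J2)))"
       "24 * (J1 + J2) * \<eta> \<le> 24 * (J1 + J2) * (c / (24 * (J1 + J2)))"
    using J by (intro mult_left_mono; simp add: eps_def \<eta>_def)+
  moreover have "(J1 + J2) * (\<delta> / (8 * (J1 + J2))) = \<delta> / 8" "24 * (J1 + J2) * (c / (24 * (J1 + J2))) = c"
    using J by (simp_all add: field_simps)
  ultimately have eps_small: "(J1 + J2) * eps \<le> \<delta> / 8" and \<eta>: "0 < \<eta>" "\<eta> \<le> 1" "24 * (J1 + J2) * \<eta> \<le> c"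
    using \<open>0 < \<eta>\<close> \<open>\<eta> \<le> 1\<close> by linarith+
  have n: "1 \<le> n" "20 * J2 \<le> real n * c"
    using c real_nat_ceiling_ge[of "20 * J2 / c"] by (auto simp: n_def pos_divide_le_eq algebra_simps)
  have a: "0 < a"
    using eps \<eta> by (simp add: a_def)
  define f where "f p = M - site_energy J1 J2 p" for p
  have f_bound: "0 \<le> f p \<and> f p \<le> J1 + J2" if "unit_spin p" for p
    using max[OF that] site_energy_nonneg[of J1 J2 p] site_energy_le[of J1 J2 "(cos \<theta>, sin \<theta>)"] J
    by (simp add: f_def M_def)
  have B: "{w \<in> space Omega. c * card (box n) < (\<Sum>t\<in>box n. f (w t))} \<in> sets Omega"
    using measurable_Omega_component unfolding f_def by measurable
  show ?thesis
  proof (intro exI allI impI)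
    fix beta mu r
    assume beta: "\<bar>ln a\<bar> / (c / 2) \<le> beta" and "gibbs J1 J2 beta mu \<and> transl_inv mu"
    then have g: "gibbs J1 J2 beta mu" and TI: "transl_inv mu"
      by auto
    interpret P: prob_space mu
      by (rule gibbsD(1)[OF g])
    have "measure mu {w. c * card (box n) < (\<Sum>t\<in>box n. f (w t))} \<le> eps"
      using B eps J \<theta> \<eta> n exp_neg_le_of_abs_ln_le[OF _ a beta] c
      by (intro gibbs_measure_le_of_spec_le[OF g finite_box])
         (auto simp: f_def M_def a_def intro!: spec_box_deficit_le)
    then have "(\<integral>w. f (w r) \<partial>mu) \<le> 4 * (c + (J1 + J2) * eps)"
      using f_bound c n by (intro integral_le_of_box_event[OF g TI]) (auto simp: f_def)
    moreover have "integrable mu (\<lambda>w. site_energy J1 J2 (w r))"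
      using site_energy_le site_energy_nonneg J by (intro integrable_gibbs_spin[OF g, where b="J1 + J2"]) auto
    then have "(\<integral>w. f (w r) \<partial>mu) = M - (\<integral>w. site_energy J1 J2 (w r) \<partial>mu)"
      unfolding f_def by (subst Bochner_Integration.integral_diff) (simp_all add: P.prob_space)
    ultimately show "M - \<delta> \<le> (\<integral>w. site_energy J1 J2 (w r) \<partial>mu)"
      using eps_small by (simp add: c_def)
  qed
qed

lemma integral_site_energy_eq:
  assumes g: "gibbs J1 J2 beta mu"
  shows "(\<integral>w. site_energy J1 J2 (w r) \<partial>mu)
         = J1 * (\<integral>w. (fst (w r))\<^sup>2 \<partial>mu) + J2 * (1 - (\<integral>w. (fst (w r))\<^sup>2 \<partial>mu))"
    and "(\<integral>w. site_energy J1 J2 (w r) \<partial>mu)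
         = J1 * (1 - (\<integral>w. (snd (w r))\<^sup>2 \<partial>mu)) + J2 * (\<integral>w. (snd (w r))\<^sup>2 \<partial>mu)"
proof -
  interpret P: prob_space mu
    by (rule gibbsD(1)[OF g])
  have int: "integrable mu (\<lambda>w. (fst (w r))\<^sup>2)" "integrable mu (\<lambda>w. (snd (w r))\<^sup>2)"
    using unit_spin_bounds(3,4) by (auto intro!: integrable_gibbs_spin[OF g, where b=1])
  have "(\<integral>w. (snd (w r))\<^sup>2 \<partial>mu) = (\<integral>w. 1 - (fst (w r))\<^sup>2 \<partial>mu)"
    using gibbs_AE_unit_spin[OF g, of r] gibbsD(2)[OF g]
    by (intro integral_cong_AE) (auto elim: AE_mp cong: measurable_cong_sets)
  then have sum1: "(\<integral>w. (snd (w r))\<^sup>2 \<partial>mu) = 1 - (\<integral>w. (fst (w r))\<^sup>2 \<partial>mu)"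
    using int by (simp add: Bochner_Integration.integral_diff P.prob_space)
  have "(\<integral>w. site_energy J1 J2 (w r) \<partial>mu)
        = J1 * (\<integral>w. (fst (w r))\<^sup>2 \<partial>mu) + J2 * (\<integral>w. (snd (w r))\<^sup>2 \<partial>mu)"
    using int by (simp add: site_energy_def)
  then show "(\<integral>w. site_energy J1 J2 (w r) \<partial>mu)
             = J1 * (\<integral>w. (fst (w r))\<^sup>2 \<partial>mu) + J2 * (1 - (\<integral>w. (fst (w r))\<^sup>2 \<partial>mu))"
    and "(\<integral>w. site_energy J1 J2 (w r) \<partial>mu)
         = J1 * (1 - (\<integral>w. (snd (w r))\<^sup>2 \<partial>mu)) + J2 * (\<integral>w. (snd (w r))\<^sup>2 \<partial>mu)"
    by (simp_all add: sum1)
qed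

lemma fraction_ge_of_mixture_ge:
  fixes a b X \<delta> :: real
  assumes "b < a" "a - (a - b) * \<delta> \<le> a * X + b * (1 - X)"
  shows "1 - \<delta> \<le> X"
proof -
  have "(a - b) * (1 - \<delta>) \<le> (a - b) * X"
    using assms(2) by (simp add: algebra_simps)
  then show ?thesis
    using assms(1) by simp
qed

lemma low_temperature_x_order:
  assumes J: "J2 < J1" "0 < J2" and \<delta>: "0 < \<delta>"
  shows "\<exists>beta0. \<forall>beta\<ge>beta0. \<forall>mu. gibbs J1 J2 beta mu \<and> transl_inv mu \<longrightarrow>
           (\<forall>r. 1 - \<delta> \<le> (\<integral>w. (fst (w r))\<^sup>2 \<partial>mu))"
proof -
  have "site_energy J1 J2 p \<le> site_energy J1 J2 (cos 0, sin 0)" if "unit_spin p" for p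
  proof -
    have "J2 * (snd p)\<^sup>2 \<le> J1 * (snd p)\<^sup>2"
      using J by (intro mult_right_mono) auto
    moreover have "J1 * (fst p)\<^sup>2 + J1 * (snd p)\<^sup>2 = J1"
      using that by (simp flip: distrib_left)
    ultimately show ?thesis
      by (simp add: site_energy_def)
  qed
  then obtain beta0 where beta0: "\<forall>beta\<ge>beta0. \<forall>mu. gibbs J1 J2 beta mu \<and> transl_inv mu \<longrightarrow>
      (\<forall>r. J1 - (J1 - J2) * \<delta> \<le> (\<integral>w. site_energy J1 J2 (w r) \<partial>mu))"
    using low_temperature_site_energy[of J1 J2 0 "(J1 - J2) * \<delta>"] J \<delta> by (auto simp: site_energy_def)
  show ?thesis
  proof (intro exI[of _ beta0] allI impI)
    fix beta mu r
    assume "beta0 \<le> beta" and "gibbs J1 J2 beta mu \<and> transl_inv mu"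
    then have "J1 - (J1 - J2) * \<delta> \<le> (\<integral>w. site_energy J1 J2 (w r) \<partial>mu)"
      and g: "gibbs J1 J2 beta mu"
      using beta0 by blast+
    then show "1 - \<delta> \<le> (\<integral>w. (fst (w r))\<^sup>2 \<partial>mu)"
      using J by (intro fraction_ge_of_mixture_ge[of J2 J1]) (simp_all add: integral_site_energy_eq(1)[OF g])
  qed
qed

lemma low_temperature_z_order:
  assumes J: "J1 < J2" "0 < J1" and \<delta>: "0 < \<delta>"
  shows "\<exists>beta0. \<forall>beta\<ge>beta0. \<forall>mu. gibbs J1 J2 beta mu \<and> transl_inv mu \<longrightarrow>
           (\<forall>r. 1 - \<delta> \<le> (\<integral>w. (snd (w r))\<^sup>2 \<partial>mu))"
proof -
  have "site_energy J1 J2 p \<le> site_energy J1 J2 (cos (pi / 2), sin (pi / 2))" if "unit_spin p" for p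
  proof -
    have "J1 * (fst p)\<^sup>2 \<le> J2 * (fst p)\<^sup>2"
      using J by (intro mult_right_mono) auto
    moreover have "J2 * (fst p)\<^sup>2 + J2 * (snd p)\<^sup>2 = J2"
      using that by (simp flip: distrib_left)
    ultimately show ?thesis
      by (simp add: site_energy_def)
  qed
  then obtain beta0 where beta0: "\<forall>beta\<ge>beta0. \<forall>mu. gibbs J1 J2 beta mu \<and> transl_inv mu \<longrightarrow>
      (\<forall>r. J2 - (J2 - J1) * \<delta> \<le> (\<integral>w. site_energy J1 J2 (w r) \<partial>mu))"
    using low_temperature_site_energy[of J1 J2 "pi / 2" "(J2 - J1) * \<delta>"] J \<delta> by (auto simp: site_energy_def)
  show ?thesis
  proof (intro exI[of _ beta0] allI impI)
    fix beta mu r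
    assume "beta0 \<le> beta" and "gibbs J1 J2 beta mu \<and> transl_inv mu"
    then have "J2 - (J2 - J1) * \<delta> \<le> (\<integral>w. site_energy J1 J2 (w r) \<partial>mu)"
      and g: "gibbs J1 J2 beta mu"
      using beta0 by blast+
    then show "1 - \<delta> \<le> (\<integral>w. (snd (w r))\<^sup>2 \<partial>mu)"
      using J by (intro fraction_ge_of_mixture_ge[of J1 J2]) (simp_all add: integral_site_energy_eq(2)[OF g] algebra_simps)
  qed
qed

theorem theorem2p4:
  fixes J1 J2 \<delta> :: real
  assumes "\<delta> > 0"
  shows "(J1 > J2 \<and> J2 > 0 \<longrightarrow>
           (\<exists>beta0. \<forall>beta\<ge>beta0. \<forall>mu. gibbs J1 J2 beta mu \<and> transl_inv mu \<and> ergodic mu \<longrightarrow>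
              (\<forall>r. (\<integral>w. (fst (w r))\<^sup>2 \<partial>mu) \<ge> 1 - \<delta>)))
       \<and> (J2 > J1 \<and> J1 > 0 \<longrightarrow>
           (\<exists>beta0. \<forall>beta\<ge>beta0. \<forall>mu. gibbs J1 J2 beta mu \<and> transl_inv mu \<and> ergodic mu \<longrightarrow>
              (\<forall>r. (\<integral>w. (snd (w r))\<^sup>2 \<partial>mu) \<ge> 1 - \<delta>)))"
proof (intro conjI impI)
  assume "J1 > J2 \<and> J2 > 0"
  then obtain beta0 where "\<forall>beta\<ge>beta0. \<forall>mu. gibbs J1 J2 beta mu \<and> transl_inv mu \<longrightarrow>
      (\<forall>r. 1 - \<delta> \<le> (\<integral>w. (fst (w r))\<^sup>2 \<partial>mu))"
    using low_temperature_x_order assms by blast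
  then show "\<exists>beta0. \<forall>beta\<ge>beta0. \<forall>mu. gibbs J1 J2 beta mu \<and> transl_inv mu \<and> ergodic mu \<longrightarrow>
      (\<forall>r. (\<integral>w. (fst (w r))\<^sup>2 \<partial>mu) \<ge> 1 - \<delta>)"
    by (intro exI[of _ beta0]) blast
next
  assume "J2 > J1 \<and> J1 > 0"
  then obtain beta0 where "\<forall>beta\<ge>beta0. \<forall>mu. gibbs J1 J2 beta mu \<and> transl_inv mu \<longrightarrow>
      (\<forall>r. 1 - \<delta> \<le> (\<integral>w. (snd (w r))\<^sup>2 \<partial>mu))"
    using low_temperature_z_order assms by blast
  then show "\<exists>beta0. \<forall>beta\<ge>beta0. \<forall>mu. gibbs J1 J2 beta mu \<and> transl_inv mu \<and> ergodic mu \<longrightarrow>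
      (\<forall>r. (\<integral>w. (snd (w r))\<^sup>2 \<partial>mu) \<ge> 1 - \<delta>)"
    by (intro exI[of _ beta0]) blast
qed

end
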